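(* Let $K\subset\mathbb{C}^2$ be a bombon such that the (complex) ellipsoid of minimal volume containing $K$ is the closed unit ball $B$ of $\mathbb{C}^2$. Then $K\cap\mathbb{S}^3$ is a linearly closed subset of the abstract linear space $LS^3$.
   Context: A convex body is a compact convex subset of $\mathbb{C}^n$ with nonempty interior. A (complex) ellipsoid is the image of the closed Euclidean unit ball under an invertible complex affine map. A bombon is a convex body $K\subset\mathbb{C}^n$ such that for every complex affine line $L$, $L\cap K$ is empty, a single point, or a closed round disk in $L$. $\mathbb{S}^3=\partial B$ is the unit sphere of $\mathbb{C}^2$. The abstract linear space $LS^3$ has point set $\mathbb{S}^3$ and abstract lines the sets $L\cap\mathbb{S}^3$ where $L$ is a complex affine line of $\mathbb{C}^2$ meeting $\mathbb{S}^3$ in more than one point (i.e. non-tangential; such $L\cap\mathbb{S}^3$ is a round circle); any two distinct points of $\mathbb{S}^3$ lie on exactly one abstract line. A subset $A\subset\mathbb{S}^3$ is linearly closed if for any two distinct $x,y\in A$ the abstract line through $x$ and $y$ is contained in $A$. *)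

theory Defs
  imports "HOL-Analysis.Analysis"
begin

text \<open>We model \<open>\<complex>\<^sup>2\<close> as \<open>complex \<times> complex\<close>, whose norm is the Euclidean (Hermitian) norm
  \<open>sqrt (|z|^2 + |w|^2)\<close>; volume is Lebesgue measure on the underlying \<open>\<real>\<^sup>4\<close>.\<close>

type_synonym c2 = "complex \<times> complex"

definition cscale :: "complex \<Rightarrow> c2 \<Rightarrow> c2" where
  "cscale t v = (t * fst v, t * snd v)"

definition complex_line :: "c2 set \<Rightarrow> bool" where
  "complex_line L \<longleftrightarrow> (\<exists>p v. v \<noteq> 0 \<and> L = {p + cscale t v | t. True})"

definition line_through :: "c2 \<Rightarrow> c2 \<Rightarrow> c2 set" where
  "line_through x y = {x + cscale t (y - x) | t. True}"

definition convex_body :: "c2 set \<Rightarrow> bool" where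
  "convex_body K \<longleftrightarrow> compact K \<and> convex K \<and> interior K \<noteq> {}"

definition complex_ellipsoid :: "c2 set \<Rightarrow> bool" where
  "complex_ellipsoid E \<longleftrightarrow>
     (\<exists>a b c d e f :: complex. a * d - b * c \<noteq> 0 \<and>
        E = (\<lambda>(z, w). (a * z + b * w + e, c * z + d * w + f)) ` cball 0 1)"

definition bombon :: "c2 set \<Rightarrow> bool" where
  "bombon K \<longleftrightarrow> convex_body K \<and>
     (\<forall>L. complex_line L \<longrightarrow>
        L \<inter> K = {} \<or> (\<exists>p. L \<inter> K = {p}) \<or>
        (\<exists>c\<in>L. \<exists>r>0. L \<inter> K = L \<inter> cball c r))"

definition min_vol_ellipsoid :: "c2 set \<Rightarrow> c2 set \<Rightarrow> bool" where
  "min_vol_ellipsoid K E \<longleftrightarrow> complex_ellipsoid E \<and> K \<subseteq> E \<and>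
     (\<forall>E'. complex_ellipsoid E' \<and> K \<subseteq> E' \<longrightarrow> measure lborel E \<le> measure lborel E')"

definition linearly_closed :: "c2 set \<Rightarrow> bool" where
  "linearly_closed A \<longleftrightarrow> A \<subseteq> sphere 0 1 \<and>
     (\<forall>x\<in>A. \<forall>y\<in>A. x \<noteq> y \<longrightarrow> line_through x y \<inter> sphere 0 1 \<subseteq> A)"

end

theory Submission
  imports Defs
begin

text \<open>Since the unit ball is an ellipsoid containing \<open>K\<close>, we have \<open>K \<subseteq> B\<close>. Take distinct
  \<open>x, y \<in> K \<inter> \<SS>\<^sup>3\<close> and let \<open>L\<close> be the complex line through them. Then \<open>L \<inter> B\<close> is a disk
  centred at the foot of the perpendicular from \<open>0\<close> to \<open>L\<close>, bounded by the circle \<open>L \<inter> \<SS>\<^sup>3\<close>,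
  and since \<open>K\<close> is a bombon, \<open>L \<inter> K\<close> is a disk inside it. A disk inside a disk that touches
  the boundary circle at two distinct points contains that circle: otherwise the centres differ,
  and the triangle inequality through the inner centre forces every touching point to be the
  single point of the inner disk farthest from the outer centre. Hence \<open>L \<inter> \<SS>\<^sup>3 \<subseteq> K\<close>.\<close>

lemma internally_tangent_point_unique:
  fixes s c p q :: "'a::real_inner"
  assumes "affine S" "s \<in> S" "c \<in> S" "s \<noteq> c"
    and inside: "S \<inter> cball s \<rho> \<subseteq> cball c R"
    and p: "p \<in> cball s \<rho>" "p \<in> sphere c R"
    and q: "q \<in> cball s \<rho>" "q \<in> sphere c R"
  shows "p = q"
proof -
  define d where "d = norm (s - c)"
  have "d > 0" using \<open>s \<noteq> c\<close> by (simp add: d_def)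
  have "\<rho> \<ge> 0" using p(1) by (meson mem_cball order_trans zero_le_dist)
  define u where "u = s + (\<rho> / d) *\<^sub>R (s - c)"
  have "(1 + \<rho> / d) *\<^sub>R s + (- (\<rho> / d)) *\<^sub>R c \<in> S"
    by (rule mem_affine[OF \<open>affine S\<close> \<open>s \<in> S\<close> \<open>c \<in> S\<close>]) simp
  then have "u \<in> S" by (simp add: u_def algebra_simps)
  moreover have "dist s u = \<rho>"
    using \<open>d > 0\<close> \<open>\<rho> \<ge> 0\<close> by (simp add: u_def dist_norm d_def)
  ultimately have "dist c u \<le> R" using inside by auto
  moreover have "u - c = (1 + \<rho> / d) *\<^sub>R (s - c)" by (simp add: u_def algebra_simps)
  then have "dist c u = (1 + \<rho> / d) * d"
    using \<open>d > 0\<close> \<open>\<rho> \<ge> 0\<close> by (simp add: dist_norm norm_minus_commute[of c u] d_def)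
  also have "\<dots> = d + \<rho>" using \<open>d > 0\<close> by (simp add: field_simps)
  ultimately have "d + \<rho> \<le> R" by simp
  \<comment> \<open>A point of the small ball on the big sphere turns the triangle inequality through \<open>s\<close>
      into an equality, which pins it down to \<open>u\<close>.\<close>
  have "w = u" if "w \<in> cball s \<rho>" "w \<in> sphere c R" for w
  proof -
    have "norm (w - c) \<le> norm (w - s) + d"
      using norm_triangle_ineq[of "w - s" "s - c"] by (simp add: d_def)
    then have ws: "norm (w - s) = \<rho>" and eq: "norm ((w - s) + (s - c)) = norm (w - s) + norm (s - c)"
      using that \<open>d + \<rho> \<le> R\<close> by (auto simp: dist_norm norm_minus_commute d_def)
    have "d *\<^sub>R (w - s) = \<rho> *\<^sub>R (s - c)"
      using eq[unfolded norm_triangle_eq] ws by (simp add: d_def)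
    then have "(1 / d) *\<^sub>R (d *\<^sub>R (w - s)) = (\<rho> / d) *\<^sub>R (s - c)" by simp
    then have "w - s = (\<rho> / d) *\<^sub>R (s - c)" using \<open>d > 0\<close> by simp
    then show ?thesis by (simp add: u_def diff_eq_eq add.commute)
  qed
  from this[OF p] this[OF q] show ?thesis by simp
qed

lemma sphere_subset_cball_if_two_tangent_points:
  fixes s c a b :: "'a::real_inner"
  assumes "affine S" "s \<in> S" "c \<in> S"
    and inside: "S \<inter> cball s \<rho> \<subseteq> cball c R"
    and a: "a \<in> cball s \<rho>" "a \<in> sphere c R"
    and b: "b \<in> cball s \<rho>" "b \<in> sphere c R"
    and "a \<noteq> b"
  shows "sphere c R \<subseteq> cball s \<rho>"
proof (cases "s = c")
  case True
  then have "R \<le> \<rho>" using a by simp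
  then show ?thesis using True by auto
next
  case False
  then show ?thesis
    using internally_tangent_point_unique[OF assms(1-3) False inside a b] \<open>a \<noteq> b\<close> by blast
qed

definition cinner :: "c2 \<Rightarrow> c2 \<Rightarrow> complex" where
  "cinner v w = cnj (fst v) * fst w + cnj (snd v) * snd w"

lemma cscale_add_left: "cscale (a + b) v = cscale a v + cscale b v"
  by (simp add: cscale_def algebra_simps)

lemma cscale_zero_left [simp]: "cscale 0 v = 0"
  by (simp add: cscale_def zero_prod_def)

lemma cscale_one [simp]: "cscale 1 v = v"
  by (simp add: cscale_def)

lemma scaleR_cscale: "r *\<^sub>R cscale t v = cscale (of_real r * t) v"
  by (simp add: cscale_def scaleR_conv_of_real)

lemma cinner_add_cscale_right: "cinner v (w + cscale t u) = cinner v w + t * cinner v u"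
  by (simp add: cinner_def cscale_def algebra_simps)

lemma cinner_self: "cinner v v = of_real ((norm v)\<^sup>2)"
  by (cases v)
    (simp add: cinner_def norm_Pair mult.commute[of "cnj _"] complex_norm_square[symmetric]
      del: of_real_power)

lemma inner_cscale_right: "w \<bullet> cscale t v = Re (t * cnj (cinner v w))"
  by (cases v, cases w) (simp add: cinner_def cscale_def inner_Pair inner_complex_def algebra_simps)

lemma affine_complex_line:
  assumes "complex_line L"
  shows "affine L"
proof -
  obtain p v where L: "L = {p + cscale t v | t. True}"
    using assms unfolding complex_line_def by blast
  have "a *\<^sub>R (p + cscale s v) + b *\<^sub>R (p + cscale t v) \<in> L" if "a + b = 1" for a b s t
  proof -
    have "a *\<^sub>R (p + cscale s v) + b *\<^sub>R (p + cscale t v)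
        = (a + b) *\<^sub>R p + cscale (of_real a * s + of_real b * t) v"
      by (simp add: scaleR_add_right scaleR_add_left scaleR_cscale cscale_add_left)
    then show ?thesis using that L by auto
  qed
  then show ?thesis unfolding affine_def L by blast
qed

lemma complex_line_line_through: "x \<noteq> y \<Longrightarrow> complex_line (line_through x y)"
  unfolding complex_line_def line_through_def by (intro exI[of _ x] exI[of _ "y - x"]) simp

lemma endpoints_in_line_through: "x \<in> line_through x y" "y \<in> line_through x y"
  unfolding line_through_def by (metis (mono_tags) mem_Collect_eq add_0_right cscale_zero_left,
      metis (mono_tags) mem_Collect_eq cscale_one add.commute diff_add_cancel)

lemma norm_add_cscale_power2:
  "cinner v m = 0 \<Longrightarrow> (norm (m + cscale t v))\<^sup>2 = (norm m)\<^sup>2 + (norm (cscale t v))\<^sup>2"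
  by (simp add: norm_add_Pythagorean orthogonal_def inner_cscale_right)

lemma complex_line_foot:
  assumes "complex_line L"
  obtains m where "m \<in> L" "\<And>w. w \<in> L \<Longrightarrow> (norm w)\<^sup>2 = (norm m)\<^sup>2 + (norm (w - m))\<^sup>2"
proof -
  obtain p v where "v \<noteq> 0" and L: "L = {p + cscale t v | t. True}"
    using assms unfolding complex_line_def by blast
  define h where "h = cinner v p / cinner v v"
  have "cinner v v \<noteq> 0" using \<open>v \<noteq> 0\<close> by (simp add: cinner_self)
  define m where "m = p + cscale (- h) v"
  have orth: "cinner v m = 0"
    using \<open>cinner v v \<noteq> 0\<close> by (simp add: m_def h_def cinner_add_cscale_right)
  have "m \<in> L" by (auto simp: L m_def)
  moreover have "(norm w)\<^sup>2 = (norm m)\<^sup>2 + (norm (w - m))\<^sup>2" if "w \<in> L" for w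
  proof -
    obtain t where "w = p + cscale t v" using \<open>w \<in> L\<close> L by blast
    then have "w = m + cscale (t + h) v" by (simp add: m_def cscale_def algebra_simps)
    then show ?thesis using norm_add_cscale_power2[OF orth] by simp
  qed
  ultimately show thesis using that by blast
qed

lemma complex_line_inter_unit_ball:
  assumes "complex_line L"
  obtains m R where "m \<in> L" "L \<inter> cball 0 1 = L \<inter> cball m R" "L \<inter> sphere 0 1 = L \<inter> sphere m R"
proof -
  obtain m where "m \<in> L" and pyth: "\<And>w. w \<in> L \<Longrightarrow> (norm w)\<^sup>2 = (norm m)\<^sup>2 + (norm (w - m))\<^sup>2"
    using complex_line_foot[OF assms] by blast
  define R where "R = sqrt (1 - (norm m)\<^sup>2)"
  have ball: "norm w \<le> 1 \<longleftrightarrow> dist m w \<le> R" and sphere: "norm w = 1 \<longleftrightarrow> dist m w = R"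
    if "w \<in> L" for w
  proof -
    have "norm w \<le> 1 \<longleftrightarrow> (norm w)\<^sup>2 \<le> 1" by (simp add: power_le_one_iff)
    also have "\<dots> \<longleftrightarrow> (norm (w - m))\<^sup>2 \<le> 1 - (norm m)\<^sup>2" using pyth[OF that] by linarith
    also have "\<dots> \<longleftrightarrow> dist m w \<le> R"
      by (simp add: R_def dist_norm norm_minus_commute) (metis norm_ge_zero real_sqrt_unique real_sqrt_le_iff)
    finally show "norm w \<le> 1 \<longleftrightarrow> dist m w \<le> R" .
    have "norm w = 1 \<longleftrightarrow> (norm w)\<^sup>2 = 1" by (smt (verit) norm_ge_zero power2_eq_1_iff)
    also have "\<dots> \<longleftrightarrow> (norm (w - m))\<^sup>2 = 1 - (norm m)\<^sup>2" using pyth[OF that] by linarith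
    also have "\<dots> \<longleftrightarrow> dist m w = R"
      by (simp add: R_def dist_norm norm_minus_commute) (metis norm_ge_zero real_sqrt_unique real_sqrt_eq_iff)
    finally show "norm w = 1 \<longleftrightarrow> dist m w = R" .
  qed
  have "L \<inter> cball 0 1 = L \<inter> cball m R" "L \<inter> sphere 0 1 = L \<inter> sphere m R"
    using ball sphere by auto
  then show thesis using that[OF \<open>m \<in> L\<close>] by blast
qed

lemma bombon_inter_line_cball:
  assumes "bombon K" "complex_line L" "x \<in> L \<inter> K" "y \<in> L \<inter> K" "x \<noteq> y"
  obtains c r where "c \<in> L" "r > 0" "L \<inter> K = L \<inter> cball c r"
proof -
  have "L \<inter> K = {} \<or> (\<exists>q. L \<inter> K = {q}) \<or> (\<exists>c\<in>L. \<exists>r>0. L \<inter> K = L \<inter> cball c r)"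
    using assms(1,2) unfolding bombon_def by blast
  moreover have "\<not> (L \<inter> K = {} \<or> (\<exists>q. L \<inter> K = {q}))"
    using assms(3-5) by (metis empty_iff singletonD)
  ultimately show thesis using that by blast
qed

theorem lemma3p2:
  fixes K :: "(complex \<times> complex) set"
  assumes "bombon K"
    and "min_vol_ellipsoid K (cball 0 1)"
  shows "linearly_closed (K \<inter> sphere 0 1)"
  unfolding linearly_closed_def
proof (intro conjI ballI impI subsetI)
  fix z assume "z \<in> K \<inter> sphere 0 1"
  then show "z \<in> sphere 0 1" by simp
next
  fix x y p
  assume x: "x \<in> K \<inter> sphere 0 1" and y: "y \<in> K \<inter> sphere 0 1" and "x \<noteq> y"
    and p: "p \<in> line_through x y \<inter> sphere 0 1"
  define L where "L = line_through x y"
  have "complex_line L" "x \<in> L" "y \<in> L"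
    unfolding L_def using \<open>x \<noteq> y\<close> by (simp_all add: complex_line_line_through endpoints_in_line_through)
  have "K \<subseteq> cball 0 1" using assms(2) by (simp add: min_vol_ellipsoid_def)
  obtain c r where "c \<in> L" "r > 0" and LK: "L \<inter> K = L \<inter> cball c r"
    by (rule bombon_inter_line_cball[OF assms(1) \<open>complex_line L\<close>, of x y])
      (use x y \<open>x \<in> L\<close> \<open>y \<in> L\<close> \<open>x \<noteq> y\<close> in auto)
  obtain m R where "m \<in> L" and LB: "L \<inter> cball 0 1 = L \<inter> cball m R"
    and LS: "L \<inter> sphere 0 1 = L \<inter> sphere m R"
    by (rule complex_line_inter_unit_ball[OF \<open>complex_line L\<close>])
  have "L \<inter> cball c r \<subseteq> L \<inter> cball 0 1" using LK \<open>K \<subseteq> cball 0 1\<close> by auto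
  then have inside: "L \<inter> cball c r \<subseteq> cball m R" using LB by auto
  have "x \<in> cball c r" "y \<in> cball c r" using LK x y \<open>x \<in> L\<close> \<open>y \<in> L\<close> by auto
  moreover have "x \<in> sphere m R" "y \<in> sphere m R" using LS x y \<open>x \<in> L\<close> \<open>y \<in> L\<close> by auto
  ultimately have "sphere m R \<subseteq> cball c r"
    by (intro sphere_subset_cball_if_two_tangent_points[OF affine_complex_line[OF \<open>complex_line L\<close>]
          \<open>c \<in> L\<close> \<open>m \<in> L\<close> inside _ _ _ _ \<open>x \<noteq> y\<close>])
  moreover have "p \<in> L" "p \<in> sphere 0 1" using p by (simp_all add: L_def)
  ultimately show "p \<in> K \<inter> sphere 0 1" using LK LS by blast
qed

end
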